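(* Let $p_c,q_c\in\mathbb{R}_{\ge 0}$, let $M=\begin{bmatrix} p_c & q_c\\ -q_c & p_c\end{bmatrix}$, and let $v_{\min}\in\mathbb{R}_{>0}$. Consider the constant power load (CPL) operator $y_{cp}$ mapping a voltage $v=[v_d,v_q]^\top$ to the current $i=y_{cp}(v)=\dfrac{1}{\|v\|_2^2}Mv$, defined on inputs satisfying $\|v\|_2\ge v_{\min}$. Then $\operatorname{SRG}(y_{cp})\subseteq \operatorname{SRG}(\widehat{y_{cp}})$, where $$\operatorname{SRG}(\widehat{y_{cp}})=\Big\{re^{\mathrm{j}\alpha}\;\Big|\;\alpha\in[-\pi,\pi],\ 0\le r\le \frac{\sigma_{\max}(M)}{v_{\min}^2}\Big\},$$ i.e. the closed disk in $\mathbb{C}$ centred at the origin of radius $\sigma_{\max}(M)/v_{\min}^2$.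
   Context: $\sigma_{\max}(M)$ denotes the largest singular value of $M$, and $\|\cdot\|_2$ the 2-norm (the paper calls it the $\mathcal{L}_2$-norm). For a Hilbert space with inner product $\langle\cdot,\cdot\rangle$, the angle between nonzero vectors is $\angle(z_1,z_2)=\arccos\big(\Re\langle z_1,z_2\rangle/(\|z_1\|_2\|z_2\|_2)\big)$. The scaled relative graph of an operator $A$ is the subset of $\mathbb{C}$ $$\operatorname{SRG}(A)=\Big\{\frac{\|y_2-y_1\|_2}{\|u_2-u_1\|_2}\exp\big[\pm\mathrm{j}\,\angle(u_2-u_1,\,y_2-y_1)\big]\Big\},$$ ranging over all pairs of distinct inputs $u_1,u_2$ in the domain of $A$ with $y_k=A(u_k)$ (and $y_2\neq y_1$). *)

theory Defs
  imports "HOL-Analysis.Analysis"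
begin

text \<open>Angle between two nonzero vectors of a real inner product space
  (the real part of the inner product is the inner product itself).\<close>
definition vangle :: "'a::real_inner \<Rightarrow> 'a \<Rightarrow> real" where
  "vangle z1 z2 = arccos (inner z1 z2 / (norm z1 * norm z2))"

definition SRG :: "'a::real_inner set \<Rightarrow> ('a \<Rightarrow> 'a) \<Rightarrow> complex set" where
  "SRG D A = {complex_of_real (norm (A u2 - A u1) / norm (u2 - u1))
                 * cis (s * vangle (u2 - u1) (A u2 - A u1)) | u1 u2 s.
               u1 \<in> D \<and> u2 \<in> D \<and> u1 \<noteq> u2 \<and> A u2 \<noteq> A u1 \<and> (s = 1 \<or> s = -1)}"

definition sigma_max :: "real^'n^'m \<Rightarrow> real" where
  "sigma_max M = sqrt (Max {l. \<exists>x. x \<noteq> 0 \<and> (transpose M ** M) *v x = l *\<^sub>R x})"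

definition Mcpl :: "real \<Rightarrow> real \<Rightarrow> real^2^2" where
  "Mcpl p q = vector [vector [p, q], vector [-q, p]]"

definition ycp :: "real^2^2 \<Rightarrow> real^2 \<Rightarrow> real^2" where
  "ycp M v = (1 / (norm v)\<^sup>2) *\<^sub>R (M *v v)"

end

theory Submission
  imports Defs
begin

(* The CPL current is the linear map M applied to the inversion v |-> v / |v|^2 in the unit
   circle. The inversion multiplies the distance of u1, u2 by 1 / (|u1| |u2|), which is at most
   1 / vmin^2 on the domain, and M is a rotation scaled by sigma_max(M) = sqrt (pc^2 + qc^2).
   So y_cp is Lipschitz with constant sigma_max(M) / vmin^2, and the SRG of an L-Lipschitz
   operator lies in the disk of radius L because its angles lie in [-pi, pi]. *)

lemma vangle_bounds:
  fixes a b :: "'a::real_inner"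
  shows "0 \<le> vangle a b \<and> vangle a b \<le> pi"
proof -
  have "\<bar>inner a b / (norm a * norm b)\<bar> \<le> 1"
  proof (cases "norm a * norm b = 0")
    case False
    then have "norm a * norm b > 0" by simp
    with Cauchy_Schwarz_ineq2[of a b] show ?thesis
      by (simp add: abs_divide)
  qed auto
  then show ?thesis
    unfolding vangle_def abs_le_iff by (intro arccos_bounded) auto
qed

lemma SRG_subset_disk_if_lipschitz:
  fixes A :: "'a::real_inner \<Rightarrow> 'a"
  assumes lipschitz: "\<And>u1 u2. u1 \<in> D \<Longrightarrow> u2 \<in> D \<Longrightarrow> norm (A u2 - A u1) \<le> L * norm (u2 - u1)"
  shows "SRG D A \<subseteq> {complex_of_real r * cis \<alpha> | r \<alpha>. \<alpha> \<in> {-pi..pi} \<and> 0 \<le> r \<and> r \<le> L}"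
proof
  fix z assume "z \<in> SRG D A"
  then obtain u1 u2 s where u: "u1 \<in> D" "u2 \<in> D" "u1 \<noteq> u2" and s: "s = 1 \<or> s = -1"
    and z: "z = complex_of_real (norm (A u2 - A u1) / norm (u2 - u1))
                  * cis (s * vangle (u2 - u1) (A u2 - A u1))"
    unfolding SRG_def by blast
  have "norm (A u2 - A u1) / norm (u2 - u1) \<le> L"
    using lipschitz[OF u(1,2)] u(3) by (simp add: divide_le_eq)
  moreover have "s * vangle (u2 - u1) (A u2 - A u1) \<in> {-pi..pi}"
    using s vangle_bounds[of "u2 - u1" "A u2 - A u1"] by auto
  ultimately show "z \<in> {complex_of_real r * cis \<alpha> | r \<alpha>. \<alpha> \<in> {-pi..pi} \<and> 0 \<le> r \<and> r \<le> L}"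
    unfolding z by fastforce
qed

lemma norm_diff_inversion:
  fixes x y :: "'a::real_inner"
  assumes "x \<noteq> 0" "y \<noteq> 0"
  shows "norm ((1 / (norm x)\<^sup>2) *\<^sub>R x - (1 / (norm y)\<^sup>2) *\<^sub>R y) = norm (x - y) / (norm x * norm y)"
proof -
  have pos: "norm x > 0" "norm y > 0" using assms by auto
  define a where "a = 1 / (norm x)\<^sup>2"
  define b where "b = 1 / (norm y)\<^sup>2"
  have expand: "(norm (u - v))\<^sup>2 = (norm u)\<^sup>2 - 2 * inner u v + (norm v)\<^sup>2" for u v :: 'a
    by (simp add: power2_norm_eq_inner inner_diff_left inner_diff_right inner_commute)
  have "(norm (a *\<^sub>R x - b *\<^sub>R y))\<^sup>2 = a\<^sup>2 * (norm x)\<^sup>2 - 2 * a * b * inner x y + b\<^sup>2 * (norm y)\<^sup>2"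
    unfolding expand by (simp add: power_mult_distrib)
  also have "\<dots> = ((norm x)\<^sup>2 - 2 * inner x y + (norm y)\<^sup>2) / ((norm x)\<^sup>2 * (norm y)\<^sup>2)"
    using pos unfolding a_def b_def by (simp add: field_simps power2_eq_square)
  also have "\<dots> = (norm (x - y) / (norm x * norm y))\<^sup>2"
    by (simp add: expand power_divide power_mult_distrib)
  finally show ?thesis
    unfolding a_def b_def by (rule power2_eq_imp_eq) auto
qed

lemma norm_ycp_diff_le:
  assumes bound: "\<And>w. norm (M *v w) \<le> c * norm w" and "c \<ge> 0"
    and "vmin > 0" and "norm u1 \<ge> vmin" and "norm u2 \<ge> vmin"
  shows "norm (ycp M u2 - ycp M u1) \<le> c / vmin\<^sup>2 * norm (u2 - u1)"
proof -
  have pos: "norm u1 > 0" "norm u2 > 0" using assms by auto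
  have "norm (ycp M u2 - ycp M u1) = norm (M *v ((1 / (norm u2)\<^sup>2) *\<^sub>R u2 - (1 / (norm u1)\<^sup>2) *\<^sub>R u1))"
    unfolding ycp_def by (simp add: matrix_vector_mult_diff_distrib matrix_vector_mult_scaleR)
  also have "\<dots> \<le> c * norm ((1 / (norm u2)\<^sup>2) *\<^sub>R u2 - (1 / (norm u1)\<^sup>2) *\<^sub>R u1)"
    by (rule bound)
  also have "\<dots> = c * (norm (u2 - u1) / (norm u2 * norm u1))"
    using pos by (simp add: norm_diff_inversion)
  also have "\<dots> \<le> c * (norm (u2 - u1) / vmin\<^sup>2)"
  proof -
    have "vmin\<^sup>2 \<le> norm u2 * norm u1"
      unfolding power2_eq_square using assms by (intro mult_mono) auto
    then show ?thesis
      using assms pos by (intro mult_left_mono divide_left_mono) auto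
  qed
  finally show ?thesis by simp
qed

lemma norm_Mcpl_mult: "norm (Mcpl p q *v w) = sqrt (p\<^sup>2 + q\<^sup>2) * norm w"
proof -
  have "(norm (Mcpl p q *v w))\<^sup>2 = (p\<^sup>2 + q\<^sup>2) * (norm w)\<^sup>2"
    unfolding power2_norm_eq_inner
    by (simp add: inner_vec_def sum_2 Mcpl_def matrix_vector_mult_def power2_eq_square algebra_simps)
  also have "\<dots> = (sqrt (p\<^sup>2 + q\<^sup>2) * norm w)\<^sup>2"
    by (simp add: power_mult_distrib)
  finally show ?thesis
    by (rule power2_eq_imp_eq) auto
qed

lemma sigma_max_Mcpl: "sigma_max (Mcpl p q) = sqrt (p\<^sup>2 + q\<^sup>2)"
proof -
  have gram: "transpose (Mcpl p q) ** Mcpl p q = (p\<^sup>2 + q\<^sup>2) *\<^sub>R mat 1"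
    by (simp add: vec_eq_iff forall_2 Mcpl_def transpose_def matrix_matrix_mult_def sum_2 mat_def
        power2_eq_square)
  have "(\<exists>x::real^2. x \<noteq> 0 \<and> (p\<^sup>2 + q\<^sup>2) *\<^sub>R x = l *\<^sub>R x) \<longleftrightarrow> l = p\<^sup>2 + q\<^sup>2" for l
  proof
    assume "\<exists>x::real^2. x \<noteq> 0 \<and> (p\<^sup>2 + q\<^sup>2) *\<^sub>R x = l *\<^sub>R x"
    then show "l = p\<^sup>2 + q\<^sup>2" by (metis scaleR_cancel_right)
  next
    assume "l = p\<^sup>2 + q\<^sup>2"
    then show "\<exists>x::real^2. x \<noteq> 0 \<and> (p\<^sup>2 + q\<^sup>2) *\<^sub>R x = l *\<^sub>R x"
      by (intro exI[of _ "vec 1"]) (auto simp: vec_eq_iff)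
  qed
  then have "{l. \<exists>x. x \<noteq> 0 \<and> (transpose (Mcpl p q) ** Mcpl p q) *v x = l *\<^sub>R x} = {p\<^sup>2 + q\<^sup>2}"
    unfolding gram scaleR_matrix_vector_assoc[symmetric] matrix_vector_mul_lid by auto
  then show ?thesis
    unfolding sigma_max_def by simp
qed

theorem lemma1:
  fixes pc qc vmin :: real
  assumes "pc \<ge> 0" and "qc \<ge> 0" and "vmin > 0"
  shows "SRG {v :: real^2. norm v \<ge> vmin} (ycp (Mcpl pc qc))
         \<subseteq> {complex_of_real r * cis \<alpha> | r \<alpha>. \<alpha> \<in> {-pi..pi} \<and> 0 \<le> r \<and>
               r \<le> sigma_max (Mcpl pc qc) / vmin\<^sup>2}"
proof (rule SRG_subset_disk_if_lipschitz)
  fix u1 u2 :: "real^2"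
  assume "u1 \<in> {v. norm v \<ge> vmin}" "u2 \<in> {v. norm v \<ge> vmin}"
  then show "norm (ycp (Mcpl pc qc) u2 - ycp (Mcpl pc qc) u1)
      \<le> sigma_max (Mcpl pc qc) / vmin\<^sup>2 * norm (u2 - u1)"
    unfolding sigma_max_Mcpl using \<open>vmin > 0\<close>
    by (intro norm_ycp_diff_le) (auto simp: norm_Mcpl_mult)
qed

end
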